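(* The semigroup $\mathbb NA$ is scored if and only if $\mathbb C[S_1]$ is a simple $\mathbb Z^d$-graded $D(R_A)$-module (it has no nonzero proper $\mathbb Z^d$-graded $D(R_A)$-submodules).
   Context: $A\subset\mathbb Z^d$ is a finite set generating the group $\mathbb Z^d$; $R_A=\mathbb C[\mathbb NA]\subseteq\mathbb C[t_1^{\pm1},\dots,t_d^{\pm1}]$; $D(R_A)=\{P\in\mathbb C[t^{\pm1}]\langle\partial_1,\dots,\partial_d\rangle:P(R_A)\subseteq R_A\}$, which acts on Laurent polynomials. For a facet $\sigma$ of $\mathbb R_{\ge0}A$, $F_\sigma$ is the unique linear form with $F_\sigma(\mathbb R_{\ge0}A)\ge0$, $F_\sigma(\sigma)=0$, $F_\sigma(\mathbb Z^d)=\mathbb Z$. $S_1=\bigcap_{\sigma\text{ facet}}\{\mathbf a\in\mathbb Z^d:F_\sigma(\mathbf a)\in F_\sigma(\mathbb NA)\}$ (equivalently the set of $\mathbf a$ with $E_\sigma(\mathbf a)\neq\emptyset$ for all facets, where $E_\sigma(\mathbf a)=\{\boldsymbol\lambda\in\mathbb C(A\cap\sigma)/\mathbb Z(A\cap\sigma):\mathbf a-\boldsymbol\lambda\in\mathbb NA+\mathbb Z(A\cap\sigma)\}$), and $\mathbb C[S_1]=\bigoplus_{\mathbf a\in S_1}\mathbb Ct^{\mathbf a}$, a $\mathbb Z^d$-graded $D(R_A)$-submodule of $\mathbb C[t^{\pm1}]$. $\mathbb NA$ is scored if $\mathbb NA=S_1$. *)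

theory Defs
  imports "HOL-Analysis.Analysis"
begin

text \<open>Exponent lattice Z^d is modelled as int ^ 'd for a finite index type 'd (d = CARD('d)).\<close>

definition real_of_lattice :: "int ^ 'd \<Rightarrow> real ^ 'd" where
  "real_of_lattice a = (\<chi> i. real_of_int (a $ i))"

inductive_set semigroup_gen :: "(int ^ 'd) set \<Rightarrow> (int ^ 'd) set" for A where
  zero: "0 \<in> semigroup_gen A"
| add: "x \<in> semigroup_gen A \<Longrightarrow> a \<in> A \<Longrightarrow> x + a \<in> semigroup_gen A"

inductive_set group_gen :: "(int ^ 'd) set \<Rightarrow> (int ^ 'd) set" for A where
  zero: "0 \<in> group_gen A"
| gen: "a \<in> A \<Longrightarrow> a \<in> group_gen A"
| diff: "x \<in> group_gen A \<Longrightarrow> y \<in> group_gen A \<Longrightarrow> x - y \<in> group_gen A"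

definition real_cone :: "(int ^ 'd) set \<Rightarrow> (real ^ 'd) set" where
  "real_cone A = {x. \<exists>c. (\<forall>a\<in>A. c a \<ge> 0) \<and> x = (\<Sum>a\<in>A. c a *\<^sub>R real_of_lattice a)}"

text \<open>w is (the coefficient vector of) the primitive facet form F_sigma:
  F(x) = w . x, nonnegative on the cone, zero on sigma, F(Z^d) = Z.\<close>
definition is_facet_form :: "(int ^ 'd) set \<Rightarrow> (real ^ 'd) set \<Rightarrow> real ^ 'd \<Rightarrow> bool" where
  "is_facet_form A \<sigma> w \<longleftrightarrow>
     (\<forall>x\<in>real_cone A. w \<bullet> x \<ge> 0) \<and> (\<forall>x\<in>\<sigma>. w \<bullet> x = 0) \<and>
     (\<lambda>a. w \<bullet> real_of_lattice a) ` UNIV = \<int>"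

definition S1 :: "(int ^ 'd) set \<Rightarrow> (int ^ 'd) set" where
  "S1 A = {a. \<forall>\<sigma> w. \<sigma> facet_of real_cone A \<longrightarrow> is_facet_form A \<sigma> w \<longrightarrow>
              w \<bullet> real_of_lattice a \<in> (\<lambda>b. w \<bullet> real_of_lattice b) ` semigroup_gen A}"

text \<open>Laurent polynomials C[t^{+-1}]: finitely supported coefficient functions.\<close>
definition laurent :: "(int ^ 'd \<Rightarrow> complex) set" where
  "laurent = {f. finite {m. f m \<noteq> 0}}"

definition span_monomials :: "(int ^ 'd) set \<Rightarrow> (int ^ 'd \<Rightarrow> complex) set" where
  "span_monomials S = {f \<in> laurent. \<forall>m. f m \<noteq> 0 \<longrightarrow> m \<in> S}"

text \<open>Differential operators in C[t^{+-1}]<d_1,...,d_d>, in the normal form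
  P = sum of P(a,b) t^a d^b (finitely many nonzero coefficients).\<close>
definition diffops :: "((int ^ 'd) \<times> (nat ^ 'd) \<Rightarrow> complex) set" where
  "diffops = {P. finite {p. P p \<noteq> 0}}"

definition int_of_natvec :: "nat ^ 'd \<Rightarrow> int ^ 'd" where
  "int_of_natvec b = (\<chi> i. int (b $ i))"

text \<open>d^b t^m = ffact(m,b) t^(m-b), ffact(m,b) = prod_i m_i (m_i - 1) ... (m_i - b_i + 1).\<close>
definition ffact_vec :: "int ^ 'd \<Rightarrow> nat ^ 'd \<Rightarrow> complex" where
  "ffact_vec m b = (\<Prod>i\<in>UNIV. \<Prod>j<b $ i. of_int (m $ i - int j))"

definition act :: "((int ^ 'd) \<times> (nat ^ 'd) \<Rightarrow> complex) \<Rightarrow> (int ^ 'd \<Rightarrow> complex) \<Rightarrow> (int ^ 'd \<Rightarrow> complex)" where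
  "act P f = (\<lambda>n. \<Sum>p\<in>{p. P p \<noteq> 0}.
      P p * ffact_vec (n + int_of_natvec (snd p) - fst p) (snd p) *
            f (n + int_of_natvec (snd p) - fst p))"

definition DRA :: "(int ^ 'd) set \<Rightarrow> ((int ^ 'd) \<times> (nat ^ 'd) \<Rightarrow> complex) set" where
  "DRA A = {P \<in> diffops. \<forall>f \<in> span_monomials (semigroup_gen A).
                 act P f \<in> span_monomials (semigroup_gen A)}"

definition graded_submodule :: "(int ^ 'd) set \<Rightarrow> (int ^ 'd \<Rightarrow> complex) set \<Rightarrow> (int ^ 'd \<Rightarrow> complex) set \<Rightarrow> bool" where
  "graded_submodule A N M \<longleftrightarrow> N \<subseteq> M \<and> (\<lambda>_. 0) \<in> N \<and>
     (\<forall>f\<in>N. \<forall>g\<in>N. (\<lambda>m. f m + g m) \<in> N) \<and>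
     (\<forall>c. \<forall>f\<in>N. (\<lambda>m. c * f m) \<in> N) \<and>
     (\<forall>P\<in>DRA A. \<forall>f\<in>N. act P f \<in> N) \<and>
     (\<forall>f\<in>N. \<forall>a. (\<lambda>m. if m = a then f a else 0) \<in> N)"

definition simple_graded_module :: "(int ^ 'd) set \<Rightarrow> (int ^ 'd \<Rightarrow> complex) set \<Rightarrow> bool" where
  "simple_graded_module A M \<longleftrightarrow> M \<noteq> {\<lambda>_. 0} \<and>
     (\<forall>N. graded_submodule A N M \<longrightarrow> N = {\<lambda>_. 0} \<or> N = M)"

end

theory Submission
  imports Defs
begin

text \<open>
  If \<open>\<nat>A\<close> is scored, a nonzero graded submodule of \<open>\<complex>[S\<^sub>1] = \<complex>[\<nat>A]\<close> contains a
  monomial \<open>t\<^sup>a\<close>, \<open>a \<in> \<nat>A\<close>. A facet form \<open>F\<close> takes two consecutive values on \<open>\<nat>A\<close>,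
  hence every large integer. So if \<open>m \<in> \<nat>A\<close> but \<open>m - a \<notin> S\<^sub>1\<close>, then for one of the finitely
  many facet forms (each facet has exactly one) \<open>F(m)\<close> lies in a finite set of values different
  from \<open>F(a)\<close>. The product \<open>g\<close> of the corresponding affine functions \<open>F(m) - c\<close> is a
  polynomial with \<open>g(a) \<noteq> 0\<close>, and \<open>t\<^sup>m \<mapsto> g(m) t\<^sup>m\<^sup>-\<^sup>a\<close> is a differential operator
  preserving \<open>\<complex>[\<nat>A]\<close> that sends \<open>t\<^sup>a\<close> to a nonzero multiple of \<open>1\<close>; multiplying by the
  \<open>t\<^sup>b\<close>, \<open>b \<in> \<nat>A\<close>, then recovers all of \<open>\<complex>[\<nat>A]\<close>. Conversely, \<open>\<complex>[\<nat>A]\<close> is always a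
  nonzero graded submodule of \<open>\<complex>[S\<^sub>1]\<close>, so simplicity forces \<open>\<nat>A = S\<^sub>1\<close>.
\<close>

lemma real_of_lattice_zero [simp]: "real_of_lattice 0 = 0"
  by (simp add: real_of_lattice_def vec_eq_iff)

lemma real_of_lattice_add: "real_of_lattice (x + y) = real_of_lattice x + real_of_lattice y"
  by (simp add: real_of_lattice_def vec_eq_iff)

lemma real_of_lattice_diff: "real_of_lattice (x - y) = real_of_lattice x - real_of_lattice y"
  by (simp add: real_of_lattice_def vec_eq_iff)

lemma inner_real_of_lattice: "w \<bullet> real_of_lattice m = (\<Sum>i\<in>UNIV. w $ i * real_of_int (m $ i))"
  by (simp add: inner_vec_def real_of_lattice_def)

lemma semigroup_gen_add:
  assumes "x \<in> semigroup_gen A" "y \<in> semigroup_gen A"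
  shows "x + y \<in> semigroup_gen A"
  using assms(2)
proof (induction y rule: semigroup_gen.induct)
  case zero
  then show ?case using assms(1) by simp
next
  case (add y a)
  then show ?case using semigroup_gen.add[of "x + y" A a] by (simp add: add.assoc)
qed

lemma group_gen_imp_diff_semigroup_gen:
  "z \<in> group_gen A \<Longrightarrow> \<exists>x\<in>semigroup_gen A. \<exists>y\<in>semigroup_gen A. z = x - y"
proof (induction z rule: group_gen.induct)
  case zero
  then show ?case using semigroup_gen.zero by force
next
  case (gen a)
  have "0 + a \<in> semigroup_gen A" by (rule semigroup_gen.add[OF semigroup_gen.zero gen])
  then show ?case using semigroup_gen.zero by force
next
  case (diff x y)
  then obtain x1 y1 x2 y2 where
    "x1 \<in> semigroup_gen A" "y1 \<in> semigroup_gen A" "x = x1 - y1"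
    "x2 \<in> semigroup_gen A" "y2 \<in> semigroup_gen A" "y = x2 - y2" by blast
  moreover have "x - y = (x1 + y2) - (y1 + x2)" using calculation by (simp add: algebra_simps)
  ultimately show ?case using semigroup_gen_add by blast
qed

lemma semigroup_gen_subset_S1: "semigroup_gen A \<subseteq> S1 A"
  unfolding S1_def by blast

section \<open>The cone and its facet forms\<close>

lemma real_of_lattice_in_real_cone: "finite A \<Longrightarrow> a \<in> A \<Longrightarrow> real_of_lattice a \<in> real_cone A"
  unfolding real_cone_def
  by (rule CollectI, rule exI[of _ "\<lambda>b. if b = a then 1 else 0"])
    (simp add: if_distrib[of "\<lambda>c. c *\<^sub>R _"] cong: if_cong)

lemma convex_cone_real_cone: "convex_cone (real_cone A)"
  unfolding convex_cone_iff
proof (intro conjI ballI allI impI)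
  show "0 \<in> real_cone A" unfolding real_cone_def by (auto intro!: exI[of _ "\<lambda>_. 0"])
next
  fix x y assume "x \<in> real_cone A" "y \<in> real_cone A"
  then obtain c d where "\<forall>a\<in>A. c a \<ge> 0" "x = (\<Sum>a\<in>A. c a *\<^sub>R real_of_lattice a)"
     "\<forall>a\<in>A. d a \<ge> 0" "y = (\<Sum>a\<in>A. d a *\<^sub>R real_of_lattice a)"
    unfolding real_cone_def by blast
  then show "x + y \<in> real_cone A" unfolding real_cone_def
    by (auto intro!: exI[of _ "\<lambda>a. c a + d a"] simp: scaleR_add_left sum.distrib)
next
  fix x and k :: real assume "x \<in> real_cone A" "0 \<le> k"
  then obtain c where "\<forall>a\<in>A. c a \<ge> 0" "x = (\<Sum>a\<in>A. c a *\<^sub>R real_of_lattice a)"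
    unfolding real_cone_def by blast
  then show "k *\<^sub>R x \<in> real_cone A" using \<open>0 \<le> k\<close> unfolding real_cone_def
    by (auto intro!: exI[of _ "\<lambda>a. k * c a"] simp: scaleR_sum_right)
qed

lemma real_cone_eq_convex_cone_hull:
  assumes "finite A"
  shows "real_cone A = convex_cone hull (real_of_lattice ` A)"
proof
  show "convex_cone hull (real_of_lattice ` A) \<subseteq> real_cone A"
    by (rule hull_minimal) (use real_of_lattice_in_real_cone assms convex_cone_real_cone in auto)
next
  have "(\<Sum>a\<in>B. c a *\<^sub>R real_of_lattice a) \<in> convex_cone hull (real_of_lattice ` A)"
    if "finite B" "B \<subseteq> A" "\<forall>a\<in>A. c a \<ge> 0" for B c
    using that
  proof (induction B rule: finite_induct)
    case empty
    then show ?case by (simp add: convex_cone_hull_contains_0)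
  next
    case (insert b B)
    then have "c b *\<^sub>R real_of_lattice b \<in> convex_cone hull (real_of_lattice ` A)"
      by (intro convex_cone_hull_mul hull_inc) auto
    then show ?case using insert by (simp add: convex_cone_hull_add)
  qed
  then show "real_cone A \<subseteq> convex_cone hull (real_of_lattice ` A)"
    unfolding real_cone_def using assms by blast
qed

lemma finite_facets_real_cone: "finite A \<Longrightarrow> finite {\<sigma>. \<sigma> facet_of real_cone A}"
  by (simp add: real_cone_eq_convex_cone_hull finite_polyhedron_facets polyhedron_convex_cone_hull)

lemma nonneg_on_real_cone_imp_nonneg_on_semigroup_gen:
  assumes "finite A" "\<forall>x\<in>real_cone A. w \<bullet> x \<ge> 0" "m \<in> semigroup_gen A"
  shows "w \<bullet> real_of_lattice m \<ge> 0"
  using assms(3)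
proof (induction m rule: semigroup_gen.induct)
  case zero
  then show ?case by simp
next
  case (add x a)
  then show ?case
    using assms real_of_lattice_in_real_cone[of A a] by (simp add: real_of_lattice_add inner_add_right)
qed

lemma span_real_of_lattice_generators:
  assumes "group_gen A = UNIV"
  shows "span (real_of_lattice ` A) = UNIV"
proof -
  have lattice: "real_of_lattice z \<in> span (real_of_lattice ` A)" for z
  proof -
    have "z \<in> group_gen A" using assms by simp
    then show ?thesis
      by (induction z rule: group_gen.induct) (simp_all add: span_zero span_base real_of_lattice_diff span_diff)
  qed
  have "axis i 1 = real_of_lattice (axis i 1)" for i
    by (simp add: real_of_lattice_def vec_eq_iff axis_def)
  then have axis: "axis i 1 \<in> span (real_of_lattice ` A)" for i
    using lattice by metis
  have "x \<in> span (real_of_lattice ` A)" for x :: "real ^ 'a"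
  proof -
    have "x = (\<Sum>i\<in>UNIV. x $ i *s axis i 1)" by (simp add: basis_expansion)
    also have "\<dots> = (\<Sum>i\<in>UNIV. x $ i *\<^sub>R axis i 1)" by (simp add: scalar_mult_eq_scaleR)
    also have "\<dots> \<in> span (real_of_lattice ` A)" by (intro span_sum span_mul axis)
    finally show ?thesis .
  qed
  then show ?thesis by auto
qed

lemma zero_in_face_of_conic:
  assumes "conic S" "F face_of S" "F \<noteq> {}"
  shows "0 \<in> F"
proof -
  obtain x where "x \<in> F" using assms(3) by blast
  moreover have "conic F" using assms(1,2) by (rule face_of_conic)
  ultimately show ?thesis using conic_mul[of F x 0] by simp
qed

lemma dim_facet_of_full_cone:
  fixes S :: "'a::euclidean_space set"
  assumes "conic S" "span S = UNIV" "F facet_of S"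
  shows "dim F + 1 = DIM('a)"
proof -
  have F: "F face_of S" "F \<noteq> {}" "aff_dim F = aff_dim S - 1"
    using assms(3) unfolding facet_of_def by auto
  then have "0 \<in> F" using assms(1) zero_in_face_of_conic by blast
  then have "0 \<in> S" using F(1) face_of_imp_subset by blast
  have "aff_dim S = DIM('a)"
    using aff_dim_zero[OF hull_inc[OF \<open>0 \<in> S\<close>]] dim_eq_full assms(2) by auto
  moreover have "aff_dim F = dim F"
    by (rule aff_dim_zero[OF hull_inc[OF \<open>0 \<in> F\<close>]])
  ultimately show ?thesis using F(3) by simp
qed

lemma inner_proportional_if_vanish_on_hyperplane:
  fixes w1 w2 x0 :: "'a::euclidean_space"
  assumes "dim F + 1 = DIM('a)" "\<forall>x\<in>F. w1 \<bullet> x = 0" "\<forall>x\<in>F. w2 \<bullet> x = 0" "w1 \<bullet> x0 \<noteq> 0"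
  shows "w2 = (w2 \<bullet> x0 / (w1 \<bullet> x0)) *\<^sub>R w1"
proof -
  have "x0 \<notin> span F"
    using orthogonal_to_span[of x0 F w1] assms(2,4) by (auto simp: orthogonal_def)
  then have "dim (insert x0 F) = DIM('a)" using assms(1) by (simp add: dim_insert)
  then have span_UNIV: "span (insert x0 F) = UNIV" using dim_eq_full by blast
  define v where "v = (w1 \<bullet> x0) *\<^sub>R w2 - (w2 \<bullet> x0) *\<^sub>R w1"
  have "\<forall>x\<in>insert x0 F. orthogonal v x"
    using assms(2,3) by (simp add: v_def orthogonal_def inner_diff_left)
  then have "orthogonal v v" using orthogonal_to_span span_UNIV by blast
  then have "(w1 \<bullet> x0) *\<^sub>R w2 = (w2 \<bullet> x0) *\<^sub>R w1" by (simp add: v_def orthogonal_self)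
  then have "(1 / (w1 \<bullet> x0)) *\<^sub>R ((w1 \<bullet> x0) *\<^sub>R w2) = (w2 \<bullet> x0 / (w1 \<bullet> x0)) *\<^sub>R w1"
    by simp
  then show ?thesis using assms(4) by simp
qed

lemma nonneg_multiple_of_primitive_form:
  assumes "(\<lambda>a. w \<bullet> real_of_lattice a) ` UNIV = \<int>" "(\<lambda>a. (l *\<^sub>R w) \<bullet> real_of_lattice a) ` UNIV = \<int>"
    and "l \<ge> 0"
  shows "l = 1"
proof -
  obtain z1 where "w \<bullet> real_of_lattice z1 = 1" using assms(1) by (metis Ints_1 imageE)
  then have "l = (l *\<^sub>R w) \<bullet> real_of_lattice z1" by simp
  then obtain i where i: "l = of_int i" using assms(2) by (metis Ints_cases rangeI)
  obtain z2 where "(l *\<^sub>R w) \<bullet> real_of_lattice z2 = 1" using assms(2) by (metis Ints_1 imageE)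
  moreover obtain k where "w \<bullet> real_of_lattice z2 = of_int k" using assms(1) by (metis Ints_cases rangeI)
  ultimately have "i * k = 1" using i by (metis inner_scaleR_left of_int_eq_1_iff of_int_mult)
  then show ?thesis using assms(3) i zmult_eq_1_iff by force
qed

lemma facet_form_unique:
  fixes A :: "(int ^ 'd) set"
  assumes "finite A" "group_gen A = UNIV" "\<sigma> facet_of real_cone A"
    and w1: "is_facet_form A \<sigma> w1" and w2: "is_facet_form A \<sigma> w2"
  shows "w1 = w2"
proof -
  have cone1: "\<forall>x\<in>real_cone A. w1 \<bullet> x \<ge> 0" and vanish1: "\<forall>x\<in>\<sigma>. w1 \<bullet> x = 0"
    and range1: "(\<lambda>a. w1 \<bullet> real_of_lattice a) ` UNIV = \<int>"
    using w1 unfolding is_facet_form_def by blast+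
  have cone2: "\<forall>x\<in>real_cone A. w2 \<bullet> x \<ge> 0" and vanish2: "\<forall>x\<in>\<sigma>. w2 \<bullet> x = 0"
    and range2: "(\<lambda>a. w2 \<bullet> real_of_lattice a) ` UNIV = \<int>"
    using w2 unfolding is_facet_form_def by blast+
  have "span (real_of_lattice ` A) \<subseteq> span (real_cone A)"
    by (intro span_mono) (use real_of_lattice_in_real_cone[OF assms(1)] in blast)
  then have "span (real_cone A) = UNIV" using span_real_of_lattice_generators[OF assms(2)] by blast
  moreover have "conic (real_cone A)"
    by (simp add: real_cone_eq_convex_cone_hull[OF assms(1)] conic_convex_cone_hull)
  ultimately have dim_\<sigma>: "dim \<sigma> + 1 = DIM(real ^ 'd)"
    using dim_facet_of_full_cone assms(3) by blast
  obtain a0 where a0: "a0 \<in> A" "w1 \<bullet> real_of_lattice a0 \<noteq> 0"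
  proof (rule ccontr)
    assume "\<not> thesis"
    then have "orthogonal w1 x" for x
      using that orthogonal_to_span[of x "real_of_lattice ` A" w1] span_real_of_lattice_generators[OF assms(2)]
      by (auto simp: orthogonal_def)
    moreover obtain z where "w1 \<bullet> real_of_lattice z = 1"
      using range1 by (metis Ints_1 imageE)
    ultimately show False by (simp add: orthogonal_def)
  qed
  define l where "l = w2 \<bullet> real_of_lattice a0 / (w1 \<bullet> real_of_lattice a0)"
  have w2_eq: "w2 = l *\<^sub>R w1"
    unfolding l_def by (rule inner_proportional_if_vanish_on_hyperplane[OF dim_\<sigma> vanish1 vanish2 a0(2)])
  have "l \<ge> 0"
    using cone1 cone2 real_of_lattice_in_real_cone[OF assms(1) a0(1)] unfolding l_def
    by (simp add: divide_nonneg_nonneg)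
  then have "l = 1" using nonneg_multiple_of_primitive_form range1 range2 unfolding w2_eq by blast
  then show ?thesis using w2_eq by simp
qed

lemma finite_facet_forms:
  fixes A :: "(int ^ 'd) set"
  assumes "finite A" "group_gen A = UNIV"
  shows "finite {w. \<exists>\<sigma>. \<sigma> facet_of real_cone A \<and> is_facet_form A \<sigma> w}"
proof -
  have "finite {w. is_facet_form A \<sigma> w}" if "\<sigma> facet_of real_cone A" for \<sigma>
  proof (cases "\<exists>w. is_facet_form A \<sigma> w")
    case True
    then obtain w0 where "is_facet_form A \<sigma> w0" by blast
    then have "{w. is_facet_form A \<sigma> w} \<subseteq> {w0}" using facet_form_unique[OF assms that] by blast
    then show ?thesis by (rule finite_subset) simp
  qed simp
  moreover have "{w. \<exists>\<sigma>. \<sigma> facet_of real_cone A \<and> is_facet_form A \<sigma> w}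
      = (\<Union>\<sigma>\<in>{\<sigma>. \<sigma> facet_of real_cone A}. {w. is_facet_form A \<sigma> w})" by blast
  ultimately show ?thesis using finite_facets_real_cone[OF assms(1)] by auto
qed

section \<open>Values of a facet form on the semigroup\<close>

lemma int_submonoid_mult:
  fixes S :: "int set"
  assumes "0 \<in> S" "\<And>x y. x \<in> S \<Longrightarrow> y \<in> S \<Longrightarrow> x + y \<in> S" "x \<in> S"
  shows "int k * x \<in> S"
  by (induction k) (simp_all add: assms algebra_simps)

lemma int_submonoid_contains_ge_square:
  fixes S :: "int set"
  assumes "0 \<in> S" "\<And>x y. x \<in> S \<Longrightarrow> y \<in> S \<Longrightarrow> x + y \<in> S"
    and "p \<in> S" "p + 1 \<in> S" "0 \<le> p" "p * p \<le> n"
  shows "n \<in> S"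
proof (cases "p = 0")
  case True
  then show ?thesis
    using int_submonoid_mult[OF assms(1,2,4), of "nat n"] assms(6) by simp
next
  case False
  then have "p > 0" using assms(5) by simp
  define q r where "q = n div p" and "r = n mod p"
  have n: "n = q * p + r" and r: "0 \<le> r" "r < p"
    using \<open>p > 0\<close> by (simp_all add: q_def r_def)
  have "p \<le> q"
  proof (rule ccontr)
    assume "\<not> p \<le> q"
    then have "(q + 1) * p \<le> p * p" using \<open>p > 0\<close> by (simp add: mult_right_mono)
    then show False using n r assms(6) by (simp add: algebra_simps)
  qed
  have "int (nat (q - r)) * p + int (nat r) * (p + 1) = n"
    using n r \<open>p \<le> q\<close> by (simp add: algebra_simps)
  moreover have "int (nat (q - r)) * p + int (nat r) * (p + 1) \<in> S"
    by (intro assms(2) int_submonoid_mult[OF assms(1,2,3)] int_submonoid_mult[OF assms(1,2,4)])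
  ultimately show ?thesis by simp
qed

lemma facet_form_values_cofinite:
  fixes A :: "(int ^ 'd) set"
  assumes "finite A" "group_gen A = UNIV" "is_facet_form A \<sigma> w"
  shows "\<exists>K. \<forall>n::int. K \<le> n \<longrightarrow> of_int n \<in> (\<lambda>b. w \<bullet> real_of_lattice b) ` semigroup_gen A"
proof -
  define S where "S = {k::int. of_int k \<in> (\<lambda>b. w \<bullet> real_of_lattice b) ` semigroup_gen A}"
  have range: "(\<lambda>a. w \<bullet> real_of_lattice a) ` UNIV = \<int>"
    and cone: "\<forall>x\<in>real_cone A. w \<bullet> x \<ge> 0"
    using assms(3) unfolding is_facet_form_def by blast+
  have mem_S: "k \<in> S" if "b \<in> semigroup_gen A" "w \<bullet> real_of_lattice b = of_int k" for b k
    unfolding S_def using that by (metis image_eqI mem_Collect_eq)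
  have zero: "0 \<in> S" using mem_S[OF semigroup_gen.zero] by simp
  have add: "x + y \<in> S" if xy: "x \<in> S" "y \<in> S" for x y
  proof -
    obtain b c where "b \<in> semigroup_gen A" "c \<in> semigroup_gen A"
      "of_int x = w \<bullet> real_of_lattice b" "of_int y = w \<bullet> real_of_lattice c"
      using xy unfolding S_def by blast
    then show ?thesis
      using mem_S[of "b + c"] semigroup_gen_add[of b A c] by (simp add: real_of_lattice_add inner_add_right)
  qed
  obtain p where p: "p \<in> S" "p + 1 \<in> S" "0 \<le> p"
  proof -
    obtain z where "w \<bullet> real_of_lattice z = 1" using range by (metis Ints_1 imageE)
    moreover obtain x y where xy: "x \<in> semigroup_gen A" "y \<in> semigroup_gen A" "z = x - y"
      using group_gen_imp_diff_semigroup_gen[of z A] assms(2) by auto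
    ultimately have x: "w \<bullet> real_of_lattice x = w \<bullet> real_of_lattice y + 1"
      by (simp add: real_of_lattice_diff inner_diff_right)
    have "w \<bullet> real_of_lattice y \<in> \<int>" using range by blast
    then obtain p where p: "w \<bullet> real_of_lattice y = of_int p" by (rule Ints_cases)
    have "p \<in> S" using mem_S[OF xy(2) p] .
    moreover have "p + 1 \<in> S" using mem_S[OF xy(1)] x p by simp
    moreover have "0 \<le> p"
      using nonneg_on_real_cone_imp_nonneg_on_semigroup_gen[OF assms(1) cone xy(2)] p by simp
    ultimately show thesis using that by blast
  qed
  have "n \<in> S" if "p * p \<le> n" for n
    using int_submonoid_contains_ge_square[OF zero add p that] .
  then show ?thesis unfolding S_def by blast
qed

section \<open>Polynomial functions and differential operators\<close>

text \<open>
  Since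
  \<open>t\<^sup>b \<partial>\<^sup>b t\<^sup>m = ffact_vec m b \<cdot> t\<^sup>m\<close>, each such \<open>g\<close> gives the differential operator
  \<open>t\<^sup>m \<mapsto> g(m) t\<^sup>m\<close>, a polynomial in the Euler operators \<open>t\<^sub>i \<partial>\<^sub>i\<close>.
\<close>

inductive_set lattice_poly :: "(int ^ 'd \<Rightarrow> complex) set" where
  ffact: "(\<lambda>m. ffact_vec m b) \<in> lattice_poly"
| add: "f \<in> lattice_poly \<Longrightarrow> g \<in> lattice_poly \<Longrightarrow> (\<lambda>m. f m + g m) \<in> lattice_poly"
| scale: "f \<in> lattice_poly \<Longrightarrow> (\<lambda>m. c * f m) \<in> lattice_poly"

lemma ffact_vec_zero [simp]: "ffact_vec m 0 = 1"
  by (simp add: ffact_vec_def)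

lemma lattice_poly_const: "(\<lambda>m. c) \<in> lattice_poly"
  using lattice_poly.scale[OF lattice_poly.ffact[of 0], of c] by simp

lemma lattice_poly_sum:
  "finite I \<Longrightarrow> (\<And>i. i \<in> I \<Longrightarrow> f i \<in> lattice_poly) \<Longrightarrow> (\<lambda>m. \<Sum>i\<in>I. f i m) \<in> lattice_poly"
proof (induction I rule: finite_induct)
  case empty
  then show ?case using lattice_poly_const[of 0] by simp
next
  case (insert i I)
  then show ?case using lattice_poly.add[of "f i" "\<lambda>m. \<Sum>i\<in>I. f i m"] by simp
qed

lemma ffact_vec_mult_coord:
  "ffact_vec m b * of_int (m $ i) =
     ffact_vec m (\<chi> j. if j = i then b $ j + 1 else b $ j) + of_nat (b $ i) * ffact_vec m b"
proof -
  define F where "F j n = (\<Prod>k<n. (of_int (m $ j - int k) :: complex))" for j n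
  have "ffact_vec m (\<chi> j. if j = i then b $ j + 1 else b $ j)
      = (\<Prod>j\<in>UNIV. F j (b $ j) * (if j = i then of_int (m $ i - int (b $ i)) else 1))"
    unfolding ffact_vec_def F_def by (intro prod.cong) (auto simp: lessThan_Suc)
  also have "\<dots> = ffact_vec m b * of_int (m $ i - int (b $ i))"
    by (simp add: prod.distrib ffact_vec_def F_def)
  finally show ?thesis by (simp add: algebra_simps)
qed

lemma lattice_poly_mult_coord: "f \<in> lattice_poly \<Longrightarrow> (\<lambda>m. f m * of_int (m $ i)) \<in> lattice_poly"
proof (induction f rule: lattice_poly.induct)
  case (ffact b)
  have "(\<lambda>m. ffact_vec m (\<chi> j. if j = i then b $ j + 1 else b $ j) + of_nat (b $ i) * ffact_vec m b)
      \<in> lattice_poly"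
    by (intro lattice_poly.intros)
  then show ?case by (simp add: ffact_vec_mult_coord)
next
  case (add f g)
  then show ?case using lattice_poly.add[OF add.IH] by (simp add: algebra_simps)
next
  case (scale f c)
  then show ?case using lattice_poly.scale[OF scale.IH, of c] by (simp add: algebra_simps)
qed

lemma lattice_poly_mult_affine:
  assumes "f \<in> lattice_poly"
  shows "(\<lambda>m. f m * of_real (w \<bullet> real_of_lattice m - c)) \<in> lattice_poly"
proof -
  have "(\<lambda>m. f m * of_real (w \<bullet> real_of_lattice m - c)) =
     (\<lambda>m. (\<Sum>i\<in>UNIV. of_real (w $ i) * (f m * of_int (m $ i))) + (- of_real c) * f m)"
    by (simp add: inner_real_of_lattice algebra_simps sum_distrib_left)
  also have "\<dots> \<in> lattice_poly"
    by (intro lattice_poly.intros lattice_poly_sum lattice_poly_mult_coord assms) simp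
  finally show ?thesis .
qed

lemma lattice_poly_prod_affine:
  "finite T \<Longrightarrow> (\<lambda>m. \<Prod>(w, c)\<in>T. of_real (w \<bullet> real_of_lattice m - c)) \<in> lattice_poly"
proof (induction T rule: finite_induct)
  case empty
  then show ?case using lattice_poly_const[of 1] by simp
next
  case (insert p T)
  obtain w c where p: "p = (w, c)" by force
  have "(\<lambda>m. (\<Prod>(w, c)\<in>T. of_real (w \<bullet> real_of_lattice m - c)) * of_real (w \<bullet> real_of_lattice m - c))
      \<in> lattice_poly"
    by (rule lattice_poly_mult_affine[OF insert.IH])
  then show ?case using insert by (simp add: p mult.commute)
qed

lemma act_eq_sum_superset:
  assumes "finite S" "{p. P p \<noteq> 0} \<subseteq> S"
  shows "act P h n = (\<Sum>p\<in>S. P p * ffact_vec (n + int_of_natvec (snd p) - fst p) (snd p) *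
            h (n + int_of_natvec (snd p) - fst p))"
  unfolding act_def by (rule sum.mono_neutral_left[OF assms]) auto

lemma diffops_add: "P \<in> diffops \<Longrightarrow> Q \<in> diffops \<Longrightarrow> (\<lambda>p. P p + Q p) \<in> diffops"
  unfolding diffops_def
  by (rule CollectI, rule finite_subset[of _ "{p. P p \<noteq> 0} \<union> {p. Q p \<noteq> 0}"]) auto

lemma diffops_scale: "P \<in> diffops \<Longrightarrow> (\<lambda>p. c * P p) \<in> diffops"
  unfolding diffops_def by (auto elim: finite_subset[rotated])

lemma act_add:
  assumes "P \<in> diffops" "Q \<in> diffops"
  shows "act (\<lambda>p. P p + Q p) h n = act P h n + act Q h n"
proof -
  define S where "S = {p. P p \<noteq> 0} \<union> {p. Q p \<noteq> 0}"
  have S: "finite S" using assms by (simp add: S_def diffops_def)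
  have "{p. P p + Q p \<noteq> 0} \<subseteq> S" "{p. P p \<noteq> 0} \<subseteq> S" "{p. Q p \<noteq> 0} \<subseteq> S"
    by (auto simp: S_def)
  from this[THEN act_eq_sum_superset[OF S]] show ?thesis
    by (simp add: algebra_simps sum.distrib)
qed

lemma act_scale:
  assumes "P \<in> diffops"
  shows "act (\<lambda>p. c * P p) h n = c * act P h n"
proof -
  have S: "finite {p. P p \<noteq> 0}" using assms by (simp add: diffops_def)
  have "{p. c * P p \<noteq> 0} \<subseteq> {p. P p \<noteq> 0}" "{p. P p \<noteq> 0} \<subseteq> {p. P p \<noteq> 0}" by auto
  from this[THEN act_eq_sum_superset[OF S]] show ?thesis
    by (simp add: algebra_simps sum_distrib_left)
qed

lemma lattice_poly_imp_diffop:
  assumes "g \<in> lattice_poly"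
  shows "\<exists>P\<in>diffops. \<forall>h n. act P h n = g (n + a) * h (n + a)"
  using assms
proof (induction g rule: lattice_poly.induct)
  case (ffact b)
  \<comment> \<open>the operator \<open>t\<^sup>b\<^sup>-\<^sup>a \<partial>\<^sup>b\<close>\<close>
  define P where "P = (\<lambda>p. if p = (int_of_natvec b - a, b) then (1::complex) else 0)"
  have supp: "{p. P p \<noteq> 0} = {(int_of_natvec b - a, b)}" by (auto simp: P_def)
  then have "act P h n = ffact_vec (n + a) b * h (n + a)" for h n
    unfolding act_def by (simp add: P_def)
  moreover have "P \<in> diffops" by (simp add: diffops_def supp)
  ultimately show ?case by blast
next
  case (add f g)
  then obtain P Q where "P \<in> diffops" "\<forall>h n. act P h n = f (n + a) * h (n + a)"
    and "Q \<in> diffops" "\<forall>h n. act Q h n = g (n + a) * h (n + a)" by blast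
  then show ?case
    by (intro bexI[of _ "\<lambda>p. P p + Q p"]) (simp_all add: act_add diffops_add algebra_simps)
next
  case (scale f c)
  then obtain P where "P \<in> diffops" "\<forall>h n. act P h n = f (n + a) * h (n + a)" by blast
  then show ?case
    by (intro bexI[of _ "\<lambda>p. c * P p"]) (simp_all add: act_scale diffops_scale)
qed

lemma diffop_in_DRA:
  assumes "P \<in> diffops" "\<And>h n. act P h n = g (n + a) * h (n + a)"
    and "\<And>m. m \<in> semigroup_gen A \<Longrightarrow> g m \<noteq> 0 \<Longrightarrow> m - a \<in> semigroup_gen A"
  shows "P \<in> DRA A"
  unfolding DRA_def
proof (intro CollectI conjI ballI assms(1))
  fix f assume f: "f \<in> span_monomials (semigroup_gen A)"
  have "{n. act P f n \<noteq> 0} \<subseteq> (\<lambda>m. m - a) ` {m. f m \<noteq> 0}"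
    using assms(2) by (auto intro!: image_eqI[of _ _ "_ + a"])
  moreover have "finite {m. f m \<noteq> 0}" using f unfolding span_monomials_def laurent_def by auto
  ultimately have "act P f \<in> laurent" unfolding laurent_def by (auto elim: finite_subset)
  moreover have "n \<in> semigroup_gen A" if "act P f n \<noteq> 0" for n
  proof -
    have "f (n + a) \<noteq> 0" "g (n + a) \<noteq> 0" using that assms(2) by auto
    then have "n + a \<in> semigroup_gen A" "g (n + a) \<noteq> 0" using f unfolding span_monomials_def by auto
    then show ?thesis using assms(3) by force
  qed
  ultimately show "act P f \<in> span_monomials (semigroup_gen A)" unfolding span_monomials_def by blast
qed

lemma facet_value_bounded_if_shift_not_value:
  fixes A :: "(int ^ 'd) set"
  assumes "finite A" "is_facet_form A \<sigma> w"
    and K: "\<And>n. K \<le> n \<Longrightarrow> of_int n \<in> (\<lambda>b. w \<bullet> real_of_lattice b) ` semigroup_gen A"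
    and m: "m \<in> semigroup_gen A"
    and not_value: "w \<bullet> real_of_lattice (m - a) \<notin> (\<lambda>b. w \<bullet> real_of_lattice b) ` semigroup_gen A"
  shows "\<exists>c::int. w \<bullet> real_of_lattice m = of_int c \<and> 0 \<le> c \<and> c < K + \<lceil>w \<bullet> real_of_lattice a\<rceil> \<and>
    of_int c \<noteq> w \<bullet> real_of_lattice a"
proof -
  have "w \<bullet> real_of_lattice m \<in> \<int>" "w \<bullet> real_of_lattice a \<in> \<int>"
    using assms(2) unfolding is_facet_form_def by blast+
  then obtain c d where c: "w \<bullet> real_of_lattice m = of_int c" and d: "w \<bullet> real_of_lattice a = of_int d"
    by (meson Ints_cases)
  have diff: "w \<bullet> real_of_lattice (m - a) = of_int (c - d)"
    using c d by (simp add: real_of_lattice_diff inner_diff_right)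
  have "0 \<le> c"
    using nonneg_on_real_cone_imp_nonneg_on_semigroup_gen[OF assms(1) _ m, of w] assms(2) c
    unfolding is_facet_form_def by simp
  moreover have "c \<noteq> d"
  proof
    assume "c = d"
    then have "w \<bullet> real_of_lattice (m - a) = w \<bullet> real_of_lattice 0" using diff by simp
    then show False using not_value semigroup_gen.zero by blast
  qed
  moreover have "c < K + d"
  proof (rule ccontr)
    assume "\<not> c < K + d"
    then have "of_int (c - d) \<in> (\<lambda>b. w \<bullet> real_of_lattice b) ` semigroup_gen A"
      by (intro K) simp
    then show False using not_value diff by simp
  qed
  ultimately show ?thesis using c d by simp
qed

lemma finite_separating_facet_values:
  fixes A :: "(int ^ 'd) set" and a :: "int ^ 'd"
  assumes "finite A" "group_gen A = UNIV"
  obtains T :: "((real ^ 'd) \<times> real) set"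
  where "finite T" "\<And>w c. (w, c) \<in> T \<Longrightarrow> w \<bullet> real_of_lattice a \<noteq> c"
    and "\<And>m. m \<in> semigroup_gen A \<Longrightarrow> m - a \<notin> S1 A \<Longrightarrow> \<exists>(w, c)\<in>T. w \<bullet> real_of_lattice m = c"
proof -
  define W where "W = {w. \<exists>\<sigma>. \<sigma> facet_of real_cone A \<and> is_facet_form A \<sigma> w}"
  have "finite W" unfolding W_def by (rule finite_facet_forms[OF assms])
  have "\<forall>w\<in>W. \<exists>K. \<forall>n. K \<le> n \<longrightarrow> of_int n \<in> (\<lambda>b. w \<bullet> real_of_lattice b) ` semigroup_gen A"
    using facet_form_values_cofinite[OF assms] unfolding W_def by blast
  then obtain K where K: "\<forall>w\<in>W. \<forall>n. K w \<le> n \<longrightarrow>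
      of_int n \<in> (\<lambda>b. w \<bullet> real_of_lattice b) ` semigroup_gen A"
    by (metis bchoice)
  define C where "C w = {c::int. 0 \<le> c \<and> c < K w + \<lceil>w \<bullet> real_of_lattice a\<rceil> \<and>
      of_int c \<noteq> w \<bullet> real_of_lattice a}" for w
  define T where "T = (\<Union>w\<in>W. (\<lambda>c. (w, real_of_int c)) ` C w)"
  have "finite (C w)" for w
    by (rule finite_subset[of _ "{0..<K w + \<lceil>w \<bullet> real_of_lattice a\<rceil>}"]) (auto simp: C_def)
  then have "finite T" unfolding T_def using \<open>finite W\<close> by blast
  moreover have "w \<bullet> real_of_lattice a \<noteq> c" if "(w, c) \<in> T" for w c
    using that unfolding T_def C_def by auto
  moreover have "\<exists>(w, c)\<in>T. w \<bullet> real_of_lattice m = c"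
    if m: "m \<in> semigroup_gen A" "m - a \<notin> S1 A" for m
  proof -
    obtain \<sigma> w where w: "\<sigma> facet_of real_cone A" "is_facet_form A \<sigma> w"
      and not_value: "w \<bullet> real_of_lattice (m - a) \<notin> (\<lambda>b. w \<bullet> real_of_lattice b) ` semigroup_gen A"
      using m(2) unfolding S1_def by blast
    then have "w \<in> W" unfolding W_def by blast
    then obtain c where "c \<in> C w" "w \<bullet> real_of_lattice m = of_int c"
      using facet_value_bounded_if_shift_not_value[OF assms(1) w(2) _ m(1) not_value] K
      unfolding C_def by blast
    then show ?thesis unfolding T_def using \<open>w \<in> W\<close> by blast
  qed
  ultimately show thesis using that by blast
qed

lemma separating_lattice_poly:
  fixes A :: "(int ^ 'd) set"
  assumes "finite A" "group_gen A = UNIV"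
  shows "\<exists>g\<in>lattice_poly. g a \<noteq> 0 \<and> (\<forall>m\<in>semigroup_gen A. m - a \<notin> S1 A \<longrightarrow> g m = 0)"
proof -
  obtain T where T: "finite T" "\<And>w c. (w, c) \<in> T \<Longrightarrow> w \<bullet> real_of_lattice a \<noteq> c"
    and vanish: "\<And>m. m \<in> semigroup_gen A \<Longrightarrow> m - a \<notin> S1 A \<Longrightarrow> \<exists>(w, c)\<in>T. w \<bullet> real_of_lattice m = c"
    using finite_separating_facet_values[OF assms] by blast
  define g where "g m = (\<Prod>(w, c)\<in>T. complex_of_real (w \<bullet> real_of_lattice m - c))" for m
  have "g \<in> lattice_poly"
    unfolding g_def[abs_def] by (rule lattice_poly_prod_affine[OF T(1)])
  moreover have "g a \<noteq> 0"
    unfolding g_def prod_zero_iff[OF T(1)] using T(2) by auto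
  moreover have "g m = 0" if m: "m \<in> semigroup_gen A" "m - a \<notin> S1 A" for m
  proof -
    obtain w c where "(w, c) \<in> T" "w \<bullet> real_of_lattice m = c" using vanish[OF m] by blast
    then show ?thesis unfolding g_def prod_zero_iff[OF T(1)] by (intro bexI[of _ "(w, c)"]) auto
  qed
  ultimately show ?thesis by blast
qed

section \<open>Graded submodules\<close>

definition laurent_monomial :: "int ^ 'd \<Rightarrow> int ^ 'd \<Rightarrow> complex" where
  "laurent_monomial a = (\<lambda>m. if m = a then 1 else 0)"

lemma laurent_monomial_in_span_monomials_iff [simp]:
  "laurent_monomial a \<in> span_monomials S \<longleftrightarrow> a \<in> S"
  by (auto simp: laurent_monomial_def span_monomials_def laurent_def)

lemma mult_laurent_monomial: "c * laurent_monomial a m = (if m = a then c else 0)"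
  by (simp add: laurent_monomial_def)

lemma span_monomials_neq_zero: "a \<in> S \<Longrightarrow> span_monomials S \<noteq> {\<lambda>_. 0}"
  by (metis laurent_monomial_def laurent_monomial_in_span_monomials_iff singletonD zero_neq_one)

lemma graded_submoduleD:
  assumes "graded_submodule A N M"
  shows "N \<subseteq> M" and "(\<lambda>_. 0) \<in> N"
    and "f \<in> N \<Longrightarrow> g \<in> N \<Longrightarrow> (\<lambda>m. f m + g m) \<in> N"
    and "f \<in> N \<Longrightarrow> (\<lambda>m. c * f m) \<in> N"
    and "P \<in> DRA A \<Longrightarrow> f \<in> N \<Longrightarrow> act P f \<in> N"
    and "f \<in> N \<Longrightarrow> (\<lambda>m. f a * laurent_monomial a m) \<in> N"
  using assms unfolding graded_submodule_def mult_laurent_monomial by blast+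

lemma graded_submodule_span_monomials_semigroup:
  assumes "semigroup_gen A \<subseteq> S"
  shows "graded_submodule A (span_monomials (semigroup_gen A)) (span_monomials S)"
  unfolding graded_submodule_def
proof (intro conjI ballI allI)
  show "span_monomials (semigroup_gen A) \<subseteq> span_monomials S"
    using assms unfolding span_monomials_def by auto
  show "(\<lambda>_. 0) \<in> span_monomials (semigroup_gen A)"
    unfolding span_monomials_def laurent_def by simp
next
  fix f g assume "f \<in> span_monomials (semigroup_gen A)" "g \<in> span_monomials (semigroup_gen A)"
  moreover have "{m. f m + g m \<noteq> 0} \<subseteq> {m. f m \<noteq> 0} \<union> {m. g m \<noteq> 0}" by auto
  ultimately show "(\<lambda>m. f m + g m) \<in> span_monomials (semigroup_gen A)"
    unfolding span_monomials_def laurent_def by (auto elim: finite_subset simp del: Collect_disj_eq)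
next
  fix c f assume "f \<in> span_monomials (semigroup_gen A)"
  moreover have "{m. c * f m \<noteq> 0} \<subseteq> {m. f m \<noteq> 0}" by auto
  ultimately show "(\<lambda>m. c * f m) \<in> span_monomials (semigroup_gen A)"
    unfolding span_monomials_def laurent_def by (auto elim: finite_subset)
next
  fix P f assume "P \<in> DRA A" "f \<in> span_monomials (semigroup_gen A)"
  then show "act P f \<in> span_monomials (semigroup_gen A)" unfolding DRA_def by blast
next
  fix f a assume "f \<in> span_monomials (semigroup_gen A)"
  then show "(\<lambda>m. if m = a then f a else 0) \<in> span_monomials (semigroup_gen A)"
    unfolding span_monomials_def laurent_def by auto
qed

lemma span_monomials_subset_graded_submodule:
  assumes N: "graded_submodule A N M" and monomials: "\<And>b. b \<in> S \<Longrightarrow> laurent_monomial b \<in> N"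
  shows "span_monomials S \<subseteq> N"
proof
  have sum_in: "(\<lambda>m. \<Sum>b\<in>F. c b * laurent_monomial b m) \<in> N" if "finite F" "F \<subseteq> S" for F c
    using that
  proof (induction F rule: finite_induct)
    case empty
    then show ?case using graded_submoduleD(2)[OF N] by simp
  next
    case (insert b F)
    then have "(\<lambda>m. c b * laurent_monomial b m + (\<Sum>b\<in>F. c b * laurent_monomial b m)) \<in> N"
      by (intro graded_submoduleD(3,4)[OF N] monomials) auto
    then show ?case using insert by simp
  qed
  fix f assume "f \<in> span_monomials S"
  then have "finite {m. f m \<noteq> 0}" "{m. f m \<noteq> 0} \<subseteq> S"
    unfolding span_monomials_def laurent_def by auto
  moreover have "(\<lambda>m. \<Sum>b\<in>{m. f m \<noteq> 0}. f b * laurent_monomial b m) = f"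
    using calculation(1) by (auto simp: mult_laurent_monomial sum.delta')
  ultimately show "f \<in> N" using sum_in by metis
qed

lemma graded_submodule_eq_if_unit:
  assumes N: "graded_submodule A N (span_monomials (semigroup_gen A))"
    and "laurent_monomial 0 \<in> N"
  shows "N = span_monomials (semigroup_gen A)"
proof -
  have "laurent_monomial b \<in> N" if "b \<in> semigroup_gen A" for b
  proof -
    \<comment> \<open>multiplication by \<open>t\<^sup>b\<close>\<close>
    obtain P where P: "P \<in> diffops" "\<forall>h n. act P h n = 1 * h (n + - b)"
      using lattice_poly_imp_diffop[OF lattice_poly_const[of 1]] by blast
    have "P \<in> DRA A"
      by (rule diffop_in_DRA[OF P(1), where g = "\<lambda>_. 1" and a = "- b"])
        (use P(2) that semigroup_gen_add in auto)
    then have "act P (laurent_monomial 0) \<in> N"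
      using graded_submoduleD(5)[OF N] assms(2) by blast
    moreover have "act P (laurent_monomial 0) = laurent_monomial b"
      using P(2) by (auto simp: laurent_monomial_def)
    ultimately show ?thesis by simp
  qed
  then show ?thesis
    using span_monomials_subset_graded_submodule[OF N] graded_submoduleD(1)[OF N] by blast
qed

lemma laurent_monomial_zero_in_graded_submodule:
  assumes "finite A" "group_gen A = UNIV" "semigroup_gen A = S1 A"
    and N: "graded_submodule A N (span_monomials (semigroup_gen A))" and "f \<in> N" "f a \<noteq> 0"
  shows "laurent_monomial 0 \<in> N"
proof -
  obtain g where g: "g \<in> lattice_poly" "g a \<noteq> 0" "\<forall>m\<in>semigroup_gen A. m - a \<notin> S1 A \<longrightarrow> g m = 0"
    using separating_lattice_poly[OF assms(1,2)] by blast
  obtain P where P: "P \<in> diffops" "\<forall>h n. act P h n = g (n + a) * h (n + a)"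
    using lattice_poly_imp_diffop[OF g(1)] by blast
  have "P \<in> DRA A"
    by (rule diffop_in_DRA[OF P(1)]) (use P(2) g(3) assms(3) in auto)
  then have "act P (\<lambda>m. f a * laurent_monomial a m) \<in> N"
    using graded_submoduleD(5,6)[OF N] assms(5) by blast
  moreover define k where "k = g a * f a"
  moreover have "act P (\<lambda>m. f a * laurent_monomial a m) = (\<lambda>m. k * laurent_monomial 0 m)"
    using P(2) by (auto simp: laurent_monomial_def k_def)
  ultimately have "(\<lambda>m. inverse k * (k * laurent_monomial 0 m)) \<in> N"
    using graded_submoduleD(4)[OF N] by simp
  moreover have "k \<noteq> 0" using g(2) assms(6) by (simp add: k_def)
  ultimately show ?thesis by (simp add: mult.assoc[symmetric])
qed

lemma graded_submodule_trivial_if_scored: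
  assumes "finite A" "group_gen A = UNIV" "semigroup_gen A = S1 A"
    and N: "graded_submodule A N (span_monomials (semigroup_gen A))"
  shows "N = {\<lambda>_. 0} \<or> N = span_monomials (semigroup_gen A)"
proof (cases "N \<subseteq> {\<lambda>_. 0}")
  case True
  then show ?thesis using graded_submoduleD(2)[OF N] by blast
next
  case False
  then obtain f a where "f \<in> N" "f a \<noteq> 0" by (auto simp: fun_eq_iff)
  then show ?thesis
    using laurent_monomial_zero_in_graded_submodule[OF assms] graded_submodule_eq_if_unit[OF N] by blast
qed

theorem proposition8p13:
  fixes A :: "(int ^ 'd) set"
  assumes "finite A"
    and "group_gen A = UNIV"
  shows "semigroup_gen A = S1 A \<longleftrightarrow> simple_graded_module A (span_monomials (S1 A))"
proof
  assume scored: "semigroup_gen A = S1 A"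
  show "simple_graded_module A (span_monomials (S1 A))"
    unfolding simple_graded_module_def scored[symmetric]
    using span_monomials_neq_zero[OF semigroup_gen.zero] graded_submodule_trivial_if_scored[OF assms scored]
    by blast
next
  assume "simple_graded_module A (span_monomials (S1 A))"
  moreover have "graded_submodule A (span_monomials (semigroup_gen A)) (span_monomials (S1 A))"
    by (rule graded_submodule_span_monomials_semigroup[OF semigroup_gen_subset_S1])
  ultimately have "span_monomials (semigroup_gen A) = span_monomials (S1 A)"
    using span_monomials_neq_zero[OF semigroup_gen.zero] unfolding simple_graded_module_def by blast
  then have "S1 A \<subseteq> semigroup_gen A" using laurent_monomial_in_span_monomials_iff by blast
  then show "semigroup_gen A = S1 A" using semigroup_gen_subset_S1 by blast
qed

end
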